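(* Let $|q|<1$, let $x\neq 0$ and $y$ be complex numbers, and let $n,m\ge 0$ be integers. Then $$\sum_{k=0}^n\sum_{l=0}^m {n\brack k}{m\brack l}(y;q)_k(y/x;q)_l\,x^l\,h_{n+m-k-l}(x,y|q)=\sum_{k=0}^n\sum_{l=0}^m {n\brack k}{m\brack l}(y;q)_k(y/x;q)_l\,(xq^k)^l\,h_{n-k}(x,y|q)\,h_{m-l}(x,y|q).$$
   Context: Throughout $|q|<1$. $(a;q)_n=\prod_{j=0}^{n-1}(1-aq^j)$ and ${n\brack k}=\frac{(q;q)_n}{(q;q)_k(q;q)_{n-k}}$. $P_n(x,y)=(x-y)(x-qy)\cdots(x-q^{n-1}y)$ with $P_0=1$, and $h_n(x,y|q)=\sum_{k=0}^n{n\brack k}P_k(x,y)$. (Note $(y/x;q)_l x^l$ is a polynomial in $x,y$.) *)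

theory Defs
  imports Complex_Main
begin

definition qpoch :: "complex \<Rightarrow> complex \<Rightarrow> nat \<Rightarrow> complex" where
  "qpoch a q n = (\<Prod>j<n. 1 - a * q ^ j)"

definition qbinom :: "complex \<Rightarrow> nat \<Rightarrow> nat \<Rightarrow> complex" where
  "qbinom q n k = qpoch q q n / (qpoch q q k * qpoch q q (n - k))"

definition Pq :: "complex \<Rightarrow> nat \<Rightarrow> complex \<Rightarrow> complex \<Rightarrow> complex" where
  "Pq q n x y = (\<Prod>j<n. x - q ^ j * y)"

definition hq :: "complex \<Rightarrow> nat \<Rightarrow> complex \<Rightarrow> complex \<Rightarrow> complex" where
  "hq q n x y = (\<Sum>k\<le>n. qbinom q n k * Pq q k x y)"

end

(*
  Write a_k = (y;q)_k and note that (y/x;q)_l x^l = P_l(x,y) and (y/x;q)_l (x q^k)^l =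
  P_l(q^k x, q^k y); in this form the identity holds for every x.  The q-Pascal rule gives
  h_(m+1)(x,y) = (1 - y) h_m(qx,qy) + x h_m(x,y), and induction on n turns this into the
  addition formula

    h_(n+m)(x,y) = sum_k [n k] a_k x^(n-k) h_m(q^k x, q^k y).

  Write * for the q-binomial convolution in n.  The addition formula makes the left side
  a * (b * x^.) and, since h = a * x^., the right side b * (a * x^.), where
  b_k = a_k (P(x,y) * h(q^k x, q^k y))_m; for the right side one uses that
  P(x,y) * h(u,v) = P(x,y) * P(u,v) * 1 is symmetric in (x,y) and (u,v).  The convolution is
  commutative and associative because it becomes multiplication of the Eulerian generating
  functions sum_n c_n t^n / (q;q)_n, which needs (q;q)_n <> 0, i.e. q not a root of unity.
*)

theory Submission
  imports Defs "HOL-Computational_Algebra.Formal_Power_Series"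
begin

lemma qpoch_0 [simp]: "qpoch a q 0 = 1"
  by (simp add: qpoch_def)

lemma qpoch_Suc: "qpoch a q (Suc n) = qpoch a q n * (1 - a * q ^ n)"
  by (simp add: qpoch_def)

lemma qpoch_Suc_left: "(1 - a) * qpoch (q * a) q n = qpoch a q (Suc n)"
  by (simp only: qpoch_def prod.lessThan_Suc_shift) (simp add: mult_ac)

lemma Pq_0 [simp]: "Pq q 0 x y = 1"
  by (simp add: Pq_def)

lemma Pq_Suc: "Pq q (Suc n) x y = Pq q n x y * (x - q ^ n * y)"
  by (simp add: Pq_def)

lemma Pq_mult: "Pq q n (c * x) (c * y) = c ^ n * Pq q n x y"
proof -
  have "Pq q n (c * x) (c * y) = (\<Prod>j<n. c * (x - q ^ j * y))"
    by (simp add: Pq_def algebra_simps)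
  then show ?thesis
    by (simp add: prod.distrib Pq_def)
qed

lemma qpoch_div_mult_power:
  assumes "x \<noteq> 0"
  shows "qpoch (y / x) q n * x ^ n = Pq q n x y"
proof -
  have "qpoch (y / x) q n * x ^ n = (\<Prod>j<n. (1 - y / x * q ^ j) * x)"
    by (simp add: qpoch_def prod.distrib)
  also have "\<dots> = Pq q n x y"
    unfolding Pq_def using assms by (intro prod.cong) (auto simp: field_simps)
  finally show ?thesis .
qed

lemma hq_0 [simp]: "hq q 0 x y = 1"
  by (simp add: hq_def qbinom_def)

lemma sum_atMost_Suc_Pascal:
  fixes c d \<alpha> \<beta> f :: "nat \<Rightarrow> 'a::comm_semiring_1"
  assumes "c 0 = \<beta> 0 * d 0" and "c (Suc m) = \<alpha> m * d m"
    and "\<And>k. k < m \<Longrightarrow> c (Suc k) = \<alpha> k * d k + \<beta> (Suc k) * d (Suc k)"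
  shows "(\<Sum>k\<le>Suc m. c k * f k) = (\<Sum>k\<le>m. d k * (\<beta> k * f k + \<alpha> k * f (Suc k)))"
proof -
  have "(\<Sum>k\<le>Suc m. c k * f k) = c 0 * f 0 + (\<Sum>k<m. c (Suc k) * f (Suc k)) + c (Suc m) * f (Suc m)"
    by (subst sum.atMost_Suc_shift) (simp add: lessThan_Suc_atMost[symmetric] add.assoc)
  also have "(\<Sum>k<m. c (Suc k) * f (Suc k))
      = (\<Sum>k<m. \<alpha> k * d k * f (Suc k)) + (\<Sum>k<m. \<beta> (Suc k) * d (Suc k) * f (Suc k))"
    using assms(3) by (simp add: sum.distrib[symmetric] distrib_right)
  finally have "(\<Sum>k\<le>Suc m. c k * f k) = \<beta> 0 * d 0 * f 0 + (\<Sum>k<m. \<beta> (Suc k) * d (Suc k) * f (Suc k))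
      + ((\<Sum>k<m. \<alpha> k * d k * f (Suc k)) + \<alpha> m * d m * f (Suc m))"
    using assms(1,2) by (simp add: algebra_simps)
  also have "\<beta> 0 * d 0 * f 0 + (\<Sum>k<m. \<beta> (Suc k) * d (Suc k) * f (Suc k)) = (\<Sum>k\<le>m. \<beta> k * d k * f k)"
    by (simp add: lessThan_Suc_atMost[symmetric] sum.lessThan_Suc_shift del: sum.lessThan_Suc)
  also have "(\<Sum>k<m. \<alpha> k * d k * f (Suc k)) + \<alpha> m * d m * f (Suc m) = (\<Sum>k\<le>m. \<alpha> k * d k * f (Suc k))"
    by (simp add: lessThan_Suc_atMost[symmetric])
  finally show ?thesis
    by (simp add: distrib_left sum.distrib mult_ac)
qed

locale non_root_of_unity =
  fixes q :: complex
  assumes power_ne_one: "0 < n \<Longrightarrow> q ^ n \<noteq> 1"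

lemma norm_less_one_non_root_of_unity:
  assumes "norm q < 1"
  shows "non_root_of_unity q"
proof
  fix n :: nat
  assume "0 < n"
  then have "norm (q ^ n) < 1"
    using assms by (simp add: norm_power power_less_one_iff)
  then show "q ^ n \<noteq> 1"
    by auto
qed

context non_root_of_unity
begin

lemma qpoch_self_ne_zero: "qpoch q q n \<noteq> 0"
  using power_ne_one[of "Suc _"] by (auto simp: qpoch_def)

lemma qbinom_0 [simp]: "qbinom q n 0 = 1"
  using qpoch_self_ne_zero by (simp add: qbinom_def)

lemma qbinom_self [simp]: "qbinom q n n = 1"
  using qpoch_self_ne_zero by (simp add: qbinom_def)

lemma qbinom_Suc_Suc:
  assumes "k < m"
  shows "qbinom q (Suc m) (Suc k) = qbinom q m k + q ^ Suc k * qbinom q m (Suc k)"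
    and "qbinom q (Suc m) (Suc k) = q ^ (m - k) * qbinom q m k + qbinom q m (Suc k)"
proof -
  obtain r where m: "m = Suc (k + r)"
    using less_imp_Suc_add[OF assms] by blast
  define A where "A = q ^ Suc k"
  define B where "B = q ^ Suc r"
  have A: "1 - A \<noteq> 0" and B: "1 - B \<noteq> 0"
    using power_ne_one[of "Suc k"] power_ne_one[of "Suc r"] by (auto simp: A_def B_def)
  define c where "c = qpoch q q m / (qpoch q q k * qpoch q q r)"
  have "Suc m - Suc k = Suc r" "m - k = Suc r" "m - Suc k = r"
    by (simp_all add: m)
  then have binoms: "qbinom q (Suc m) (Suc k) = c * ((1 - A * B) / ((1 - A) * (1 - B)))"
      "qbinom q m k = c * (1 / (1 - B))" "qbinom q m (Suc k) = c * (1 / (1 - A))"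
    by (simp_all add: qbinom_def c_def qpoch_Suc A_def B_def m power_add mult_ac)
  have powers: "q ^ Suc k = A" "q ^ (m - k) = B"
    by (simp_all add: A_def B_def m)
  have "(1 - A * B) / ((1 - A) * (1 - B)) = 1 / (1 - B) + A * (1 / (1 - A))"
    using A B by (simp add: field_simps)
  then show "qbinom q (Suc m) (Suc k) = qbinom q m k + q ^ Suc k * qbinom q m (Suc k)"
    unfolding binoms powers by (simp only: distrib_left mult.left_commute)
  have "(1 - A * B) / ((1 - A) * (1 - B)) = B * (1 / (1 - B)) + 1 / (1 - A)"
    using A B by (simp add: field_simps)
  then show "qbinom q (Suc m) (Suc k) = q ^ (m - k) * qbinom q m k + qbinom q m (Suc k)"
    unfolding binoms powers by (simp only: distrib_left mult.left_commute)
qed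

lemma sum_qbinom_Suc:
  "(\<Sum>k\<le>Suc m. qbinom q (Suc m) k * f k) = (\<Sum>k\<le>m. qbinom q m k * (q ^ k * f k + f (Suc k)))"
  using sum_atMost_Suc_Pascal[of "qbinom q (Suc m)" "\<lambda>k. q ^ k" "qbinom q m" m "\<lambda>_. 1" f]
  by (simp add: qbinom_Suc_Suc(1))

lemma sum_qbinom_Suc':
  "(\<Sum>k\<le>Suc m. qbinom q (Suc m) k * f k) = (\<Sum>k\<le>m. qbinom q m k * (f k + q ^ (m - k) * f (Suc k)))"
  using sum_atMost_Suc_Pascal[of "qbinom q (Suc m)" "\<lambda>_. 1" "qbinom q m" m "\<lambda>k. q ^ (m - k)" f]
  by (simp add: qbinom_Suc_Suc(2))

lemma hq_Suc: "hq q (Suc m) x y = (1 - y) * hq q m (q * x) (q * y) + x * hq q m x y"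
proof -
  have "hq q (Suc m) x y = (\<Sum>k\<le>m. qbinom q m k * ((1 - y) * Pq q k (q * x) (q * y) + x * Pq q k x y))"
    unfolding hq_def sum_qbinom_Suc by (intro sum.cong refl) (simp add: Pq_mult Pq_Suc algebra_simps)
  then show ?thesis
    by (simp add: hq_def distrib_left sum.distrib sum_distrib_left mult_ac)
qed

lemma hq_add:
  "hq q (n + m) x y = (\<Sum>k\<le>n. qbinom q n k * (qpoch y q k * x ^ (n - k) * hq q m (q ^ k * x) (q ^ k * y)))"
proof (induction n arbitrary: x y)
  case 0
  then show ?case by simp
next
  case (Suc n)
  define f where "f k = qpoch y q k * x ^ (Suc n - k) * hq q m (q ^ k * x) (q ^ k * y)" for k
  have "hq q (Suc n + m) x y = (1 - y) * hq q (n + m) (q * x) (q * y) + x * hq q (n + m) x y"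
    by (simp add: hq_Suc)
  also have "\<dots> = (\<Sum>k\<le>n. qbinom q n k * (f k + q ^ (n - k) * f (Suc k)))"
    unfolding Suc.IH sum_distrib_left sum.distrib[symmetric]
  proof (intro sum.cong refl)
    fix k
    assume "k \<in> {..n}"
    then have "x * x ^ (n - k) = x ^ (Suc n - k)"
      by (simp add: Suc_diff_le)
    then show "(1 - y) * (qbinom q n k * (qpoch (q * y) q k * (q * x) ^ (n - k)
          * hq q m (q ^ k * (q * x)) (q ^ k * (q * y))))
        + x * (qbinom q n k * (qpoch y q k * x ^ (n - k) * hq q m (q ^ k * x) (q ^ k * y)))
        = qbinom q n k * (f k + q ^ (n - k) * f (Suc k))"
      by (simp add: f_def qpoch_Suc_left[symmetric] power_mult_distrib algebra_simps)
  qed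
  also have "\<dots> = (\<Sum>k\<le>Suc n. qbinom q (Suc n) k * f k)"
    by (rule sum_qbinom_Suc'[symmetric])
  finally show ?case
    by (simp add: f_def)
qed

end

definition qconv :: "complex \<Rightarrow> (nat \<Rightarrow> complex) \<Rightarrow> (nat \<Rightarrow> complex) \<Rightarrow> nat \<Rightarrow> complex" where
  "qconv q a b n = (\<Sum>k\<le>n. qbinom q n k * a k * b (n - k))"

definition eulerian_fps :: "complex \<Rightarrow> (nat \<Rightarrow> complex) \<Rightarrow> complex fps" where
  "eulerian_fps q a = Abs_fps (\<lambda>n. a n / qpoch q q n)"

context non_root_of_unity
begin

lemma eulerian_fps_qconv: "eulerian_fps q (qconv q a b) = eulerian_fps q a * eulerian_fps q b"
proof (rule fps_ext)
  fix n
  have "(\<Sum>k\<le>n. qbinom q n k * a k * b (n - k)) / qpoch q q n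
      = (\<Sum>k\<le>n. a k / qpoch q q k * (b (n - k) / qpoch q q (n - k)))"
    unfolding sum_divide_distrib
    using qpoch_self_ne_zero by (intro sum.cong refl) (simp add: qbinom_def field_simps)
  then show "fps_nth (eulerian_fps q (qconv q a b)) n = fps_nth (eulerian_fps q a * eulerian_fps q b) n"
    by (simp add: eulerian_fps_def qconv_def fps_mult_nth atLeast0AtMost)
qed

lemma eulerian_fps_eq_iff: "eulerian_fps q a = eulerian_fps q b \<longleftrightarrow> a = b"
  using qpoch_self_ne_zero by (auto simp: eulerian_fps_def fps_eq_iff fun_eq_iff)

lemma qconv_left_commute: "qconv q a (qconv q b c) = qconv q b (qconv q a c)"
  by (simp add: eulerian_fps_eq_iff[symmetric] eulerian_fps_qconv mult.left_commute)

lemma hq_eq_qconv: "(\<lambda>n. hq q n x y) = qconv q (\<lambda>k. qpoch y q k) (\<lambda>j. x ^ j)"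
  using hq_add[where m = 0] by (simp add: fun_eq_iff qconv_def mult_ac)

lemma qconv_Pq_hq_commute:
  "qconv q (\<lambda>l. Pq q l x y) (\<lambda>j. hq q j u v) = qconv q (\<lambda>l. Pq q l u v) (\<lambda>j. hq q j x y)"
proof -
  have "(\<lambda>j. hq q j x y) = qconv q (\<lambda>l. Pq q l x y) (\<lambda>_. 1)" for x y
    by (simp add: fun_eq_iff hq_def qconv_def)
  then show ?thesis
    by (simp only: qconv_left_commute)
qed

lemma sum_qbinom_Pq_hq_add:
  "(\<Sum>l\<le>m. qbinom q m l * Pq q l x y * hq q (j + (m - l)) x y)
    = qconv q (\<lambda>i. qpoch y q i * qconv q (\<lambda>l. Pq q l x y) (\<lambda>r. hq q r (q ^ i * x) (q ^ i * y)) m)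
        (\<lambda>i. x ^ i) j"
  unfolding hq_add qconv_def sum_distrib_left sum_distrib_right
  by (subst sum.swap) (simp add: mult_ac)

lemma sum_sum_qbinom_Pq_hq:
  "(\<Sum>k\<le>n. \<Sum>l\<le>m. qbinom q n k * qbinom q m l * qpoch y q k * Pq q l x y * hq q (n + m - k - l) x y)
    = (\<Sum>k\<le>n. \<Sum>l\<le>m. qbinom q n k * qbinom q m l * qpoch y q k * Pq q l (q ^ k * x) (q ^ k * y)
        * hq q (n - k) x y * hq q (m - l) x y)"
  (is "?lhs = ?rhs")
proof -
  define b where
    "b = (\<lambda>k. qpoch y q k * qconv q (\<lambda>l. Pq q l x y) (\<lambda>r. hq q r (q ^ k * x) (q ^ k * y)) m)"
  have "qconv q (qpoch y q) (qconv q b (\<lambda>i. x ^ i)) n = ?lhs"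
    unfolding qconv_def[of q "qpoch y q"] b_def sum_qbinom_Pq_hq_add[symmetric]
    by (auto simp: sum_distrib_left mult_ac intro!: sum.cong)
  moreover have "qconv q b (\<lambda>j. hq q j x y) n = ?rhs"
    unfolding qconv_def[of q b] b_def qconv_Pq_hq_commute[of x y] qconv_def
    by (simp add: sum_distrib_left sum_distrib_right mult_ac)
  ultimately show ?thesis
    by (simp add: hq_eq_qconv qconv_left_commute)
qed

end

theorem corollary3p2:
  fixes q x y :: complex and n m :: nat
  assumes "norm q < 1" and "x \<noteq> 0"
  shows "(\<Sum>k\<le>n. \<Sum>l\<le>m. qbinom q n k * qbinom q m l * qpoch y q k * qpoch (y / x) q l
            * x ^ l * hq q (n + m - k - l) x y)
       = (\<Sum>k\<le>n. \<Sum>l\<le>m. qbinom q n k * qbinom q m l * qpoch y q k * qpoch (y / x) q l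
            * (x * q ^ k) ^ l * hq q (n - k) x y * hq q (m - l) x y)"
proof -
  interpret non_root_of_unity q
    using assms(1) by (rule norm_less_one_non_root_of_unity)
  have "Pq q l (c * x) (c * y) = qpoch (y / x) q l * (x * c) ^ l" for c l
    using Pq_mult[of q l c x y] qpoch_div_mult_power[OF assms(2), of y q l]
    by (simp add: power_mult_distrib mult_ac)
  moreover have "Pq q l x y = qpoch (y / x) q l * x ^ l" for l
    using qpoch_div_mult_power[OF assms(2)] by simp
  ultimately show ?thesis
    using sum_sum_qbinom_Pq_hq[of n m y x] by (simp only:) (simp add: mult_ac)
qed

end
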